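(* Let $r\ge 0$ and consider the $U_q(\mathfrak{sl}_2)$-module $M(\lambda)\otimes V^{\otimes r}$ over $\mathbb{Q}(q,\lambda)$. For $\rho=(b_0,b_1,\dots,b_r)\in\mathbb{N}^{r+1}$ put \[ v_\rho := F^{b_r}\Big(\cdots F^{b_1}\big(F^{b_0}(v_{\lambda,0})\otimes v_{1,0}\big)\cdots\otimes v_{1,0}\Big). \] Then: (1) For $r\ge 2$ and $1\le i\le r-1$, the map $\mathrm{cap}_i:=\mathrm{id}_{M(\lambda)}\otimes\mathrm{id}_V^{\otimes(i-1)}\otimes\cap\otimes\mathrm{id}_V^{\otimes(r-i-1)}:M(\lambda)\otimes V^{\otimes r}\to M(\lambda)\otimes V^{\otimes (r-2)}$ (the cap applied to the $i$-th and $(i+1)$-th tensor factors $V$) satisfies \[ \mathrm{cap}_i\big(v_{(\dots,b_{i-1},b_i,b_{i+1},b_{i+2},\dots)}\big)=-q^{-1}[b_i]_q\,v_{(\dots,b_{i-1}+b_i+b_{i+1}-1,b_{i+2},\dots)} \] (entries not displayed are unchanged). (2) For $1\le i\le r+1$, the map $\mathrm{cup}_i:=\mathrm{id}_{M(\lambda)}\otimes\mathrm{id}_V^{\otimes(i-1)}\otimes\cup\otimes\mathrm{id}_V^{\otimes(r-i+1)}:M(\lambda)\otimes V^{\otimes r}\to M(\lambda)\otimes V^{\otimes (r+2)}$ (inserting two new tensor factors $V$ in positions $i,i+1$) satisfies \[ \mathrm{cup}_i(v_\rho)=q[2]_q\,v_{(\dots,b_{i-1},1,0,b_i,\dots)}-q\,v_{(\dots,b_{i-1}+1,0,0,b_i,\dots)}-q\,v_{(\dots,b_{i-1},0,1,b_i,\dots)}.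 \] (3) For $r\ge1$, the map $\xi\otimes\mathrm{id}_V^{\otimes(r-1)}$ satisfies \[ v_{(b_0,b_1,\dots)}\mapsto\big(\lambda^{-1}q^{b_0}-\lambda q[b_0]_q\big)v_{(0,b_0+b_1,\dots)}+\lambda q^2[b_0]_q\,v_{(1,b_0+b_1-1,\dots)}. \]
   Context: $U_q(\mathfrak{sl}_2)$ is the $\mathbb{Q}(q)$-algebra generated by $K^{\pm1},E,F$ with $KE=q^2EK$, $KF=q^{-2}FK$, $KK^{-1}=1=K^{-1}K$, $EF-FE=\frac{K-K^{-1}}{q-q^{-1}}$, acting on tensor products via $\Delta(K^{\pm1})=K^{\pm1}\otimes K^{\pm1}$, $\Delta(E)=E\otimes 1+K^{-1}\otimes E$, $\Delta(F)=F\otimes K+1\otimes F$. Quantum integers: $[n]_q=\frac{q^n-q^{-n}}{q-q^{-1}}$; for a formal variable $\lambda$ ($=q^\beta$), $[\beta+k]_q=\frac{\lambda q^k-\lambda^{-1}q^{-k}}{q-q^{-1}}$. The universal Verma module $M(\lambda)$ has $\mathbb{Q}(q,\lambda)$-basis $v_{\lambda,i}$ ($i\ge0$) with $Kv_{\lambda,i}=\lambda q^{-2i}v_{\lambda,i}$, $Fv_{\lambda,i}=v_{\lambda,i+1}$, $Ev_{\lambda,i}=[i]_q[\beta-i+1]_qv_{\lambda,i-1}$. $V$ is the $2$-dimensional module with basis $v_{1,0},v_{1,1}$, $Kv_{1,j}=q^{1-2j}v_{1,j}$, $Fv_{1,0}=v_{1,1}$, $Fv_{1,1}=0$, $Ev_{1,1}=v_{1,0}$,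 $Ev_{1,0}=0$. The maps $\cap:V\otimes V\to\mathbb{Q}(q,\lambda)$ and $\cup:\mathbb{Q}(q,\lambda)\to V\otimes V$ are $\cap(v_{1,0}\otimes v_{1,0})=\cap(v_{1,1}\otimes v_{1,1})=0$, $\cap(v_{1,0}\otimes v_{1,1})=1$, $\cap(v_{1,1}\otimes v_{1,0})=-q^{-1}$, and $\cup(1)=-q\,v_{1,0}\otimes v_{1,1}+v_{1,1}\otimes v_{1,0}$. The map $\xi:M(\lambda)\otimes V\to M(\lambda)\otimes V$ is given by $\xi(v_{\lambda,k}\otimes v_{1,0})=\lambda^{-1}q^{2k}v_{\lambda,k}\otimes v_{1,0}-q(q-q^{-1})[k]_q[\beta-k+1]_qv_{\lambda,k-1}\otimes v_{1,1}$ and $\xi(v_{\lambda,k}\otimes v_{1,1})=(\lambda^{-1}+\lambda q^2-\lambda^{-1}q^{2(k+1)})v_{\lambda,k}\otimes v_{1,1}-\lambda^{-1}q^{2(k+1)}(q-q^{-1})v_{\lambda,k+1}\otimes v_{1,0}$. In the formulas, when $i=1$ the entry $b_{i-1}$ is $b_0$; terms with coefficient $[0]_q=0$ are zero. *)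

theory Defs
  imports "HOL-Computational_Algebra.Polynomial" "HOL-Computational_Algebra.Fraction_Field"
begin

text \<open>The ground field Q(q,lambda): rational functions in lambda over rational functions in q.\<close>
type_synonym K = "rat poly fract poly fract"

definition q :: K where "q = Fract [:Fract [:0, 1:] 1:] 1"
definition lam :: K where "lam = Fract [:0, 1:] 1"   \<comment> \<open>lambda = q^beta\<close>

definition qint :: "int \<Rightarrow> K" where
  "qint n = (q powi n - q powi (- n)) / (q - inverse q)"
definition qbeta :: "int \<Rightarrow> K" where
  "qbeta k = (lam * q powi k - inverse lam * q powi (- k)) / (q - inverse q)"

text \<open>The basis vector (k, [j1,...,jr]) stands for v_{lambda,k} (x) v_{1,j1} (x) ... (x) v_{1,jr}
  of M(lambda) (x) V^{(x) r}. Vectors are (finitely supported) coefficient functions.\<close>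
type_synonym basis = "nat \<times> nat list"
type_synonym vec = "basis \<Rightarrow> K"
type_synonym vvec = "nat \<Rightarrow> K"   \<comment> \<open>vectors of V in the basis v_{1,0}, v_{1,1}\<close>

definition bvec :: "basis \<Rightarrow> vec" where "bvec b = (\<lambda>c. if c = b then 1 else 0)"
definition vsc :: "K \<Rightarrow> vec \<Rightarrow> vec" where "vsc a v = (\<lambda>c. a * v c)"
definition vadd :: "vec \<Rightarrow> vec \<Rightarrow> vec" where "vadd u w = (\<lambda>c. u c + w c)"

definition lin :: "(basis \<Rightarrow> vec) \<Rightarrow> vec \<Rightarrow> vec" where
  "lin f v = (\<lambda>c. \<Sum>b\<in>{b. v b \<noteq> 0}. v b * f b c)"

definition eV :: "nat \<Rightarrow> vvec" where "eV j = (\<lambda>j'. if j' = j then 1 else 0)"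
definition KV :: "nat \<Rightarrow> vvec" where "KV j = (\<lambda>j'. q powi (1 - 2 * int j) * eV j j')"
definition FV :: "nat \<Rightarrow> vvec" where "FV j = (if j = 0 then eV 1 else (\<lambda>_. 0))"

definition tens :: "vec \<Rightarrow> vvec \<Rightarrow> vec" where
  "tens u w = (\<lambda>(k, js). if js = [] then 0 else u (k, butlast js) * w (last js))"

text \<open>Action of F on a basis vector, via Delta(F) = F (x) K + 1 (x) F, recursing on the last
  tensor factor. The list argument is the REVERSED list of V-indices.\<close>
fun Fb_rev :: "nat \<Rightarrow> nat list \<Rightarrow> vec" where
  "Fb_rev k [] = bvec (Suc k, [])"
| "Fb_rev k (j # rjs) = vadd (tens (Fb_rev k rjs) (KV j)) (tens (bvec (k, rev rjs)) (FV j))"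

definition Fact :: "vec \<Rightarrow> vec" where
  "Fact = lin (\<lambda>(k, js). Fb_rev k (rev js))"

definition vrho :: "nat list \<Rightarrow> vec" where
  "vrho bs = foldl (\<lambda>x b. (Fact ^^ b) (tens x (eV 0))) ((Fact ^^ hd bs) (bvec (0, []))) (tl bs)"

definition capV :: "nat \<Rightarrow> nat \<Rightarrow> K" where
  "capV a b = (if a = 0 \<and> b = 1 then 1 else if a = 1 \<and> b = 0 then - inverse q else 0)"

text \<open>cap on the i-th and (i+1)-th V factors (positions counted from 1).\<close>
definition capi :: "nat \<Rightarrow> vec \<Rightarrow> vec" where
  "capi i = lin (\<lambda>(k, js). vsc (capV (js ! (i - 1)) (js ! i)) (bvec (k, take (i - 1) js @ drop (i + 1) js)))"

definition cupi :: "nat \<Rightarrow> vec \<Rightarrow> vec" where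
  "cupi i = lin (\<lambda>(k, js). vadd (vsc (- q) (bvec (k, take (i - 1) js @ [0, 1] @ drop (i - 1) js)))
                                 (bvec (k, take (i - 1) js @ [1, 0] @ drop (i - 1) js)))"

definition xiop :: "vec \<Rightarrow> vec" where
  "xiop = lin (\<lambda>(k, js). case js of [] \<Rightarrow> (\<lambda>_. 0)
     | j # rest \<Rightarrow>
       (if j = 0 then
          vadd (vsc (inverse lam * q ^ (2 * k)) (bvec (k, 0 # rest)))
               (vsc (- q * (q - inverse q) * qint (int k) * qbeta (1 - int k)) (bvec (k - 1, 1 # rest)))
        else
          vadd (vsc (inverse lam + lam * q ^ 2 - inverse lam * q ^ (2 * (k + 1))) (bvec (k, 1 # rest)))
               (vsc (- inverse lam * q ^ (2 * (k + 1)) * (q - inverse q)) (bvec (k + 1, 0 # rest)))))"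

end

theory Submission
  imports Defs
begin

text \<open>The maps \<open>cap\<^sub>i\<close>, \<open>cup\<^sub>i\<close> and \<open>\<xi> \<otimes> id\<close> act only on the first few tensor
  factors and commute with \<open>F\<close>, while \<open>v\<^sub>\<rho>\<close> arises from \<open>v\<^sub>\<lambda>\<^sub>,\<^sub>0\<close> by alternately
  tensoring with \<open>v\<^sub>1\<^sub>,\<^sub>0\<close> and applying powers of \<open>F\<close>. So each map can be pushed past
  all later factors and \<open>F\<close>-powers, and the three formulas reduce to computations on
  the shortest vectors involved, driven by
  \<open>F\<^sup>b (u \<otimes> v\<^sub>1\<^sub>,\<^sub>0) = q\<^sup>b F\<^sup>b u \<otimes> v\<^sub>1\<^sub>,\<^sub>0 + [b]\<^sub>q F\<^sup>b\<^sup>-\<^sup>1 u \<otimes> v\<^sub>1\<^sub>,\<^sub>1\<close>.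
  Commutation with \<open>F\<close> is only needed, and only checked, on basis vectors of the
  factors a map acts on; for \<open>\<xi>\<close> it comes down to four identities between its
  matrix coefficients.\<close>

section \<open>Quantum integers\<close>

lemma q_nonzero: "q \<noteq> 0"
  unfolding q_def by (simp add: Zero_fract_def eq_fract)

lemma lam_nonzero: "lam \<noteq> 0"
  unfolding lam_def by (simp add: Zero_fract_def One_fract_def eq_fract)

lemma q_minus_inverse_nonzero: "q - inverse q \<noteq> 0"
proof
  assume "q - inverse q = 0"
  then have "q * q = 1"
    using q_nonzero by (simp add: field_simps)
  then have "[:Fract [:0, 1:] 1 * Fract [:0, 1:] 1:] = (1 :: rat poly fract poly)"
    unfolding q_def by (simp add: One_fract_def eq_fract)
  then have "Fract ([:0, 1:] * [:0, 1:]) 1 = (1 :: rat poly fract)"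
    by (simp add: one_pCons)
  then have "[:0, 1:] * [:0, 1:] = (1 :: rat poly)"
    by (simp add: One_fract_def eq_fract)
  then have "degree ([:0, 1:] * [:0, 1 :: rat:]) = 0" by simp
  then show False by (simp add: degree_mult_eq)
qed

lemma qint_of_nat: "qint (int n) = (q ^ n - inverse (q ^ n)) / (q - inverse q)"
  by (simp add: qint_def power_int_minus)

lemma qint_0 [simp]: "qint 0 = 0"
  by (simp add: qint_def)

lemma qint_Suc: "qint (int (Suc n)) = q ^ n + inverse q * qint (int n)"
  unfolding qint_of_nat using q_nonzero q_minus_inverse_nonzero
  by (simp add: field_simps)

lemma qint_Suc': "qint (int (Suc n)) = q * qint (int n) + inverse (q ^ n)"
  unfolding qint_of_nat using q_nonzero q_minus_inverse_nonzero
  by (simp add: field_simps)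

lemma qint_1 [simp]: "qint 1 = 1"
  using qint_Suc[of 0] by simp

lemma qint_2: "qint 2 = q + inverse q"
  using qint_Suc[of 1] by simp

lemma qbeta_1_minus: "(q - inverse q) * qbeta (1 - int k) = lam * q / q ^ k - q ^ k / (lam * q)"
  using q_nonzero lam_nonzero q_minus_inverse_nonzero
  by (simp add: qbeta_def power_int_diff power_int_minus field_simps)

lemma q_powers: "q ^ (2 * k) = (q ^ k)\<^sup>2" "q ^ (2 * (k + 1)) = q\<^sup>2 * (q ^ k)\<^sup>2" "q ^ Suc k = q * q ^ k"
  by (simp_all add: mult.commute[of 2] power_mult power_mult_distrib power2_eq_square)

section \<open>Finitely supported vectors\<close>

definition supp :: "vec \<Rightarrow> basis set" where
  "supp v = {b. v b \<noteq> 0}"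

definition finsupp :: "vec \<Rightarrow> bool" where
  "finsupp v \<longleftrightarrow> finite (supp v)"

lemma lin_eq_sum_superset:
  assumes "finite S" "supp v \<subseteq> S"
  shows "lin f v c = (\<Sum>b\<in>S. v b * f b c)"
  unfolding lin_def using assms by (intro sum.mono_neutral_left) (auto simp: supp_def)

lemma lin_cong: "(\<And>b. u b \<noteq> 0 \<Longrightarrow> f b = g b) \<Longrightarrow> lin f u = lin g u"
  unfolding lin_def by (intro ext sum.cong) auto

lemma lin_bvec: "lin f (bvec b) = f b"
  by (rule ext) (simp add: lin_def bvec_def)

lemma lin_zero [simp]: "lin f (\<lambda>_. 0) = (\<lambda>_. 0)"
  by (simp add: lin_def)

lemma lin_zero_fun [simp]: "lin (\<lambda>_ _. 0) u = (\<lambda>_. 0)"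
  by (simp add: lin_def)

lemma vadd_zero [simp]: "vadd u (\<lambda>_. 0) = u"
  by (simp add: vadd_def)

lemma lin_bvec_id: "finsupp u \<Longrightarrow> lin bvec u = u"
proof (rule ext)
  fix c
  assume "finsupp u"
  show "lin bvec u c = u c"
  proof (cases "u c = 0")
    case False
    have "lin bvec u c = (\<Sum>b\<in>supp u. if b = c then u b else 0)"
      unfolding lin_def supp_def by (rule sum.cong) (auto simp: bvec_def)
    also have "\<dots> = u c"
      using False \<open>finsupp u\<close> by (simp add: finsupp_def supp_def)
    finally show ?thesis .
  qed (auto simp: lin_def bvec_def intro!: sum.neutral)
qed

lemma supp_vadd: "supp (vadd u w) \<subseteq> supp u \<union> supp w"
  by (auto simp: supp_def vadd_def)

lemma finsupp_bvec [simp]: "finsupp (bvec b)"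
  by (simp add: finsupp_def supp_def bvec_def)

lemma finsupp_zero [simp]: "finsupp (\<lambda>_. 0)"
  by (simp add: finsupp_def supp_def)

lemma finsupp_vadd [simp]: "finsupp u \<Longrightarrow> finsupp w \<Longrightarrow> finsupp (vadd u w)"
  unfolding finsupp_def by (meson finite_UnI finite_subset supp_vadd)

lemma finsupp_vsc [simp]: "finsupp u \<Longrightarrow> finsupp (vsc a u)"
  unfolding finsupp_def by (rule finite_subset[rotated]) (auto simp: supp_def vsc_def)

lemma vsc_vsc [simp]: "vsc a (vsc b u) = vsc (a * b) u"
  by (simp add: vsc_def mult.assoc)

lemma lin_vadd:
  assumes "finsupp u" "finsupp w"
  shows "lin f (vadd u w) = vadd (lin f u) (lin f w)"
proof (rule ext)
  fix c
  let ?S = "supp u \<union> supp w"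
  have S: "finite ?S" using assms by (simp add: finsupp_def)
  have "lin f (vadd u w) c = (\<Sum>b\<in>?S. vadd u w b * f b c)"
    by (rule lin_eq_sum_superset[OF S supp_vadd])
  also have "\<dots> = (\<Sum>b\<in>?S. u b * f b c) + (\<Sum>b\<in>?S. w b * f b c)"
    by (simp add: vadd_def distrib_right sum.distrib)
  also have "\<dots> = lin f u c + lin f w c"
    by (subst (1 2) lin_eq_sum_superset[OF S]) auto
  finally show "lin f (vadd u w) c = vadd (lin f u) (lin f w) c"
    by (simp add: vadd_def)
qed

lemma lin_vsc: "lin f (vsc a u) = vsc a (lin f u)"
proof (cases "a = 0")
  case False
  then have "{b. vsc a u b \<noteq> 0} = {b. u b \<noteq> 0}" by (auto simp: vsc_def)
  then show ?thesis by (simp add: lin_def vsc_def sum_distrib_left mult.assoc)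
qed (simp add: lin_def vsc_def)

lemma lin_vadd_fun: "lin (\<lambda>b. vadd (f b) (g b)) u = vadd (lin f u) (lin g u)"
  by (simp add: lin_def vadd_def distrib_left sum.distrib)

lemma lin_vsc_fun: "lin (\<lambda>b. vsc a (f b)) u = vsc a (lin f u)"
  by (simp add: lin_def vsc_def sum_distrib_left algebra_simps)

lemma supp_lin: "supp (lin g u) \<subseteq> (\<Union>b\<in>supp u. supp (g b))"
proof
  fix c
  assume "c \<in> supp (lin g u)"
  then have "(\<Sum>b\<in>supp u. u b * g b c) \<noteq> 0"
    by (simp add: supp_def lin_def)
  then obtain b where b: "b \<in> supp u" "u b * g b c \<noteq> 0"
    by (meson sum.neutral)
  then have "c \<in> supp (g b)"
    by (simp add: supp_def)
  with b(1) show "c \<in> (\<Union>b\<in>supp u. supp (g b))" ..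
qed

lemma finsupp_lin: "finsupp u \<Longrightarrow> (\<And>b. finsupp (g b)) \<Longrightarrow> finsupp (lin g u)"
  unfolding finsupp_def using supp_lin by (meson finite_UN_I finite_subset)

lemma lin_lin:
  assumes "finsupp u" "\<And>b. finsupp (g b)"
  shows "lin f (lin g u) = lin (\<lambda>b. lin f (g b)) u"
proof (rule ext)
  fix c
  let ?S = "\<Union>b\<in>supp u. supp (g b)"
  have S: "finite ?S" using assms by (simp add: finsupp_def)
  have "lin f (lin g u) c = (\<Sum>b'\<in>?S. lin g u b' * f b' c)"
    by (rule lin_eq_sum_superset[OF S supp_lin])
  also have "\<dots> = (\<Sum>b'\<in>?S. (\<Sum>b\<in>supp u. u b * g b b') * f b' c)"
    by (simp add: lin_def supp_def)
  also have "\<dots> = (\<Sum>b\<in>supp u. u b * (\<Sum>b'\<in>?S. g b b' * f b' c))"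
    by (simp add: sum_distrib_right sum_distrib_left sum.swap[of _ ?S] mult.assoc)
  also have "\<dots> = (\<Sum>b\<in>supp u. u b * lin f (g b) c)"
    by (intro sum.cong refl arg_cong2[where f = "(*)"] lin_eq_sum_superset[symmetric] S) auto
  also have "\<dots> = lin (\<lambda>b. lin f (g b)) u c"
    by (simp add: lin_def supp_def)
  finally show "lin f (lin g u) c = lin (\<lambda>b. lin f (g b)) u c" .
qed

section \<open>Tensor factors and the action of \<open>F\<close>\<close>

abbreviation tens_v :: "vec \<Rightarrow> nat \<Rightarrow> vec" where
  "tens_v u j \<equiv> tens u (eV j)"

lemma tens_v_bvec: "tens_v (bvec (k, js)) j = bvec (k, js @ [j])"
proof (rule ext)
  fix c :: basis
  show "tens_v (bvec (k, js)) j c = bvec (k, js @ [j]) c"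
    by (cases c, rename_tac js', case_tac js' rule: rev_cases) (auto simp: tens_def bvec_def eV_def)
qed

lemma tens_v_snoc: "tens_v u j (k, js @ [j]) = u (k, js)"
  by (simp add: tens_def eV_def)

lemma tens_v_vadd: "tens_v (vadd u w) j = vadd (tens_v u j) (tens_v w j)"
  by (auto simp: tens_def vadd_def algebra_simps)

lemma tens_v_vsc: "tens_v (vsc a u) j = vsc a (tens_v u j)"
  by (auto simp: tens_def vsc_def)

lemma supp_tens_v: "supp (tens_v u j) = (\<lambda>(k, js). (k, js @ [j])) ` supp u"
proof (intro set_eqI iffI)
  fix c
  assume "c \<in> supp (tens_v u j)"
  then obtain k js where "c = (k, js @ [j])" "u (k, js) \<noteq> 0"
    by (cases c, rename_tac js', case_tac js' rule: rev_cases)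
      (auto simp: supp_def tens_def eV_def split: if_splits)
  then show "c \<in> (\<lambda>(k, js). (k, js @ [j])) ` supp u"
    by (auto simp: supp_def)
qed (auto simp: supp_def tens_v_snoc)

lemma finsupp_tens_v [simp]: "finsupp u \<Longrightarrow> finsupp (tens_v u j)"
  by (simp add: finsupp_def supp_tens_v)

lemma lin_tens_v: "lin f (tens_v u j) = lin (\<lambda>(k, js). f (k, js @ [j])) u"
proof (rule ext)
  fix c
  have inj: "inj_on (\<lambda>(k, js). (k, js @ [j])) (supp u)"
    by (rule inj_onI) auto
  have "lin f (tens_v u j) c = (\<Sum>b\<in>supp (tens_v u j). tens_v u j b * f b c)"
    by (simp add: lin_def supp_def)
  also have "\<dots> = (\<Sum>(k, js)\<in>supp u. u (k, js) * f (k, js @ [j]) c)"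
    unfolding supp_tens_v by (subst sum.reindex[OF inj]) (simp add: case_prod_unfold tens_v_snoc)
  also have "\<dots> = lin (\<lambda>(k, js). f (k, js @ [j])) u c"
    by (simp add: lin_def supp_def case_prod_unfold)
  finally show "lin f (tens_v u j) c = lin (\<lambda>(k, js). f (k, js @ [j])) u c" .
qed

lemma lin_tens_v_fun: "lin (\<lambda>b. tens_v (f b) j) u = tens_v (lin f u) j"
  by (rule ext) (auto simp: lin_def tens_def sum_distrib_left mult_ac)

definition in_MV :: "nat \<Rightarrow> vec \<Rightarrow> bool" where
  "in_MV n v \<longleftrightarrow> (\<forall>k js. v (k, js) \<noteq> 0 \<longrightarrow> length js = n \<and> set js \<subseteq> {0, 1})"

lemma in_MV_bvec: "length js = n \<Longrightarrow> set js \<subseteq> {0, 1} \<Longrightarrow> in_MV n (bvec (k, js))"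
  by (simp add: in_MV_def bvec_def)

lemma in_MV_zero [simp]: "in_MV n (\<lambda>_. 0)"
  by (simp add: in_MV_def)

lemma in_MV_vadd: "in_MV n u \<Longrightarrow> in_MV n w \<Longrightarrow> in_MV n (vadd u w)"
  unfolding in_MV_def vadd_def by (metis add_0)

lemma in_MV_vsc: "in_MV n u \<Longrightarrow> in_MV n (vsc a u)"
  unfolding in_MV_def vsc_def by (metis mult_zero_right)

lemma in_MV_tens_v: "in_MV n u \<Longrightarrow> j \<le> 1 \<Longrightarrow> in_MV (Suc n) (tens_v u j)"
  unfolding in_MV_def
  by (intro allI, rename_tac k js, case_tac js rule: rev_cases) (auto simp: tens_def eV_def)

lemma in_MV_lin: "(\<And>b. u b \<noteq> 0 \<Longrightarrow> in_MV n (g b)) \<Longrightarrow> in_MV n (lin g u)"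
  unfolding in_MV_def
proof (intro allI impI)
  fix k js
  assume g: "\<And>b. u b \<noteq> 0 \<Longrightarrow> \<forall>k js. g b (k, js) \<noteq> 0 \<longrightarrow> length js = n \<and> set js \<subseteq> {0, 1}"
    and "lin g u (k, js) \<noteq> 0"
  then have "(k, js) \<in> supp (lin g u)" by (simp add: supp_def)
  then obtain b where "u b \<noteq> 0" "g b (k, js) \<noteq> 0"
    using supp_lin by (fastforce simp: supp_def)
  with g show "length js = n \<and> set js \<subseteq> {0, 1}" by blast
qed

lemma lin_cong_in_MV:
  assumes "in_MV n u" "\<And>k js. length js = n \<Longrightarrow> set js \<subseteq> {0, 1} \<Longrightarrow> f (k, js) = g (k, js)"
  shows "lin f u = lin g u"
  using assms by (intro lin_cong) (auto simp: in_MV_def)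

lemma Fb_rev_Cons:
  "Fb_rev k (j # rjs) = vadd (vsc (q powi (1 - 2 * int j)) (tens_v (Fb_rev k rjs) j))
                             (if j = 0 then tens_v (bvec (k, rev rjs)) 1 else (\<lambda>_. 0))"
proof -
  have "tens u (KV j) = vsc (q powi (1 - 2 * int j)) (tens_v u j)" for u
    by (auto simp: tens_def KV_def vsc_def)
  moreover have "tens u (FV j) = (if j = 0 then tens_v u 1 else (\<lambda>_. 0))" for u
    by (auto simp: tens_def FV_def)
  ultimately show ?thesis by simp
qed

declare Fb_rev.simps(2) [simp del]

lemma finsupp_Fb_rev [simp]: "finsupp (Fb_rev k rjs)"
  by (induction rjs) (simp_all add: Fb_rev_Cons)

lemma in_MV_Fb_rev: "set rjs \<subseteq> {0, 1} \<Longrightarrow> in_MV (length rjs) (Fb_rev k rjs)"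
  by (induction rjs) (auto simp: Fb_rev_Cons in_MV_bvec intro!: in_MV_vadd in_MV_vsc in_MV_tens_v)

lemma Fact_bvec: "Fact (bvec (k, js)) = Fb_rev k (rev js)"
  by (simp add: Fact_def lin_bvec)

lemma finsupp_Fact [simp]: "finsupp u \<Longrightarrow> finsupp (Fact u)"
  unfolding Fact_def by (rule finsupp_lin) auto

lemma in_MV_Fact: "in_MV n u \<Longrightarrow> in_MV n (Fact u)"
  unfolding Fact_def
proof (rule in_MV_lin)
  fix b
  assume "in_MV n u" "u b \<noteq> 0"
  then show "in_MV n ((\<lambda>(k, js). Fb_rev k (rev js)) b)"
    using in_MV_Fb_rev[of "rev (snd b)" "fst b"] by (cases b) (auto simp: in_MV_def)
qed

lemma Fact_vadd: "finsupp u \<Longrightarrow> finsupp w \<Longrightarrow> Fact (vadd u w) = vadd (Fact u) (Fact w)"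
  unfolding Fact_def by (rule lin_vadd)

lemma Fact_vsc: "Fact (vsc a u) = vsc a (Fact u)"
  unfolding Fact_def by (rule lin_vsc)

lemma Fact_tens_v:
  assumes "finsupp u"
  shows "Fact (tens_v u j) = vadd (vsc (q powi (1 - 2 * int j)) (tens_v (Fact u) j))
                                  (if j = 0 then tens_v u 1 else (\<lambda>_. 0))"
proof -
  have "Fact (tens_v u j) = lin (\<lambda>(k, js). Fb_rev k (j # rev js)) u"
    by (simp add: Fact_def lin_tens_v)
  also have "\<dots> = lin (\<lambda>b. vadd (vsc (q powi (1 - 2 * int j)) (tens_v (Fact (bvec b)) j))
                                 (if j = 0 then tens_v (bvec b) 1 else (\<lambda>_. 0))) u"
    by (rule lin_cong) (auto simp: Fb_rev_Cons Fact_bvec)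
  also have "\<dots> = vadd (vsc (q powi (1 - 2 * int j)) (tens_v (Fact u) j))
                       (if j = 0 then tens_v u 1 else (\<lambda>_. 0))"
    using assms by (simp add: lin_vadd_fun lin_vsc_fun lin_tens_v_fun lin_bvec_id Fact_def lin_bvec)
  finally show ?thesis .
qed

lemma Fact_tens_v0: "finsupp u \<Longrightarrow> Fact (tens_v u 0) = vadd (vsc q (tens_v (Fact u) 0)) (tens_v u 1)"
  by (simp add: Fact_tens_v)

lemma Fact_tens_v1: "finsupp u \<Longrightarrow> Fact (tens_v u (Suc 0)) = vsc (inverse q) (tens_v (Fact u) (Suc 0))"
  by (simp add: Fact_tens_v vadd_def power_int_minus)

lemma finsupp_Fact_pow [simp]: "finsupp u \<Longrightarrow> finsupp ((Fact ^^ n) u)"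
  by (induction n) auto

lemma in_MV_Fact_pow: "in_MV m u \<Longrightarrow> in_MV m ((Fact ^^ n) u)"
  by (induction n) (auto intro: in_MV_Fact)

lemma Fact_pow_vadd:
  "finsupp u \<Longrightarrow> finsupp w \<Longrightarrow> (Fact ^^ n) (vadd u w) = vadd ((Fact ^^ n) u) ((Fact ^^ n) w)"
  by (induction n) (auto simp: Fact_vadd)

lemma Fact_pow_vsc: "(Fact ^^ n) (vsc a u) = vsc a ((Fact ^^ n) u)"
  by (induction n) (auto simp: Fact_vsc)

lemma Fact_pow_bvec_Nil: "(Fact ^^ n) (bvec (k, [])) = bvec (k + n, [])"
  by (induction n) (simp_all add: Fact_bvec)

text \<open>For \<open>b = 0\<close> the truncated \<open>b - 1\<close> is harmless because \<open>[0]\<^sub>q = 0\<close>.\<close>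

lemma Fact_pow_tens_v0:
  assumes "finsupp u"
  shows "(Fact ^^ b) (tens_v u 0)
           = vadd (vsc (q ^ b) (tens_v ((Fact ^^ b) u) 0)) (vsc (qint (int b)) (tens_v ((Fact ^^ (b - 1)) u) 1))"
proof (induction b)
  case 0
  then show ?case by (simp add: vadd_def vsc_def)
next
  case (Suc b)
  have "(Fact ^^ Suc b) (tens_v u 0)
          = vadd (vsc (q ^ b) (vadd (vsc q (tens_v ((Fact ^^ Suc b) u) 0)) (tens_v ((Fact ^^ b) u) 1)))
                 (vsc (qint (int b) * inverse q) (tens_v (Fact ((Fact ^^ (b - 1)) u)) 1))"
    using Suc assms by (simp add: Fact_vadd Fact_vsc Fact_tens_v0 Fact_tens_v1)
  also have "\<dots> = vadd (vsc (q ^ Suc b) (tens_v ((Fact ^^ Suc b) u) 0))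
                       (vsc (qint (int (Suc b))) (tens_v ((Fact ^^ (Suc b - 1)) u) 1))"
    using qint_Suc[of b] by (cases b) (simp_all add: vadd_def vsc_def algebra_simps)
  finally show ?case .
qed

lemma Fact_bvec_0: "Fact (bvec (k, [0])) = vadd (vsc q (bvec (Suc k, [0]))) (bvec (k, [1]))"
  by (simp add: Fact_bvec Fb_rev_Cons tens_v_bvec)

lemma Fact_bvec_1: "Fact (bvec (k, [Suc 0])) = vsc (inverse q) (bvec (Suc k, [Suc 0]))"
  by (simp add: Fact_bvec Fb_rev_Cons tens_v_bvec power_int_minus)

lemma Fact_pow_bvec_0:
  "(Fact ^^ n) (bvec (k, [0])) = vadd (vsc (q ^ n) (bvec (k + n, [0]))) (vsc (qint (int n)) (bvec (k + n - 1, [1])))"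
  using Fact_pow_tens_v0[of "bvec (k, [])" n] unfolding Fact_pow_bvec_Nil tens_v_bvec
  by (cases n) (simp_all add: vsc_def)

section \<open>The vectors \<open>v\<^sub>\<rho>\<close>\<close>

definition append_factors :: "nat list \<Rightarrow> vec \<Rightarrow> vec" where
  "append_factors zs w = foldl (\<lambda>x b. (Fact ^^ b) (tens_v x 0)) w zs"

lemma append_factors_Nil [simp]: "append_factors [] w = w"
  by (simp add: append_factors_def)

lemma append_factors_Cons [simp]:
  "append_factors (z # zs) w = append_factors zs ((Fact ^^ z) (tens_v w 0))"
  by (simp add: append_factors_def)

lemma append_factors_vadd:
  "finsupp u \<Longrightarrow> finsupp w \<Longrightarrow>
    append_factors zs (vadd u w) = vadd (append_factors zs u) (append_factors zs w)"
  by (induction zs arbitrary: u w) (simp_all add: tens_v_vadd Fact_pow_vadd)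

lemma append_factors_vsc: "append_factors zs (vsc a u) = vsc a (append_factors zs u)"
  by (induction zs arbitrary: u) (simp_all add: tens_v_vsc Fact_pow_vsc)

lemma vrho_append: "xs \<noteq> [] \<Longrightarrow> vrho (xs @ zs) = append_factors zs (vrho xs)"
  by (cases xs) (simp_all add: vrho_def append_factors_def)

lemma vrho_singleton: "vrho [b] = bvec (b, [])"
  by (simp add: vrho_def Fact_pow_bvec_Nil)

lemma vrho_snoc: "xs \<noteq> [] \<Longrightarrow> vrho (xs @ [b]) = (Fact ^^ b) (tens_v (vrho xs) 0)"
  by (simp add: vrho_append)

lemma finsupp_vrho [simp]: "finsupp (vrho xs)"
proof (induction xs rule: rev_induct)
  case (snoc x xs)
  then show ?case by (cases "xs = []") (simp_all add: vrho_singleton vrho_snoc)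
qed (simp add: vrho_def)

lemma in_MV_vrho: "xs \<noteq> [] \<Longrightarrow> in_MV (length xs - 1) (vrho xs)"
proof (induction xs rule: rev_induct)
  case (snoc x xs)
  show ?case
  proof (cases "xs = []")
    case True
    then show ?thesis by (simp add: vrho_singleton in_MV_bvec)
  next
    case False
    with snoc.IH have "in_MV (Suc (length xs - 1)) (tens_v (vrho xs) 0)"
      by (intro in_MV_tens_v) simp_all
    with False show ?thesis by (simp add: vrho_snoc in_MV_Fact_pow)
  qed
qed simp

lemma Fact_pow_vrho: "(Fact ^^ n) (vrho (xs @ [a])) = vrho (xs @ [a + n])"
  using funpow_add[of n a Fact]
  by (cases "xs = []") (simp_all add: vrho_singleton vrho_snoc Fact_pow_bvec_Nil add.commute)

section \<open>Linear maps commuting with \<open>F\<close>\<close>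

text \<open>\<open>l\<close> describes, on basis vectors, a map acting on \<open>M(\<lambda>) \<otimes> V\<^bsup>\<otimes>m\<^esup>\<close> and as the
  identity on all later factors. Commuting with \<open>F\<close> on \<open>M(\<lambda>) \<otimes> V\<^bsup>\<otimes>m\<^esup>\<close> propagates to
  every \<open>M(\<lambda>) \<otimes> V\<^bsup>\<otimes>n\<^esup>\<close> with \<open>n \<ge> m\<close>, because \<open>\<Delta>(F)\<close> acts on a last factor
  \<open>u \<otimes> v\<^sub>1\<^sub>,\<^sub>j\<close> through \<open>F u\<close> and \<open>u\<close> alone.\<close>

locale F_intertwiner =
  fixes l :: "basis \<Rightarrow> vec" and m :: nat
  assumes finsupp_image: "finsupp (l b)"
    and snoc_factor: "m \<le> length js \<Longrightarrow> l (k, js @ [j]) = tens_v (l (k, js)) j"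
    and Fact_on_basis:
      "length js = m \<Longrightarrow> set js \<subseteq> {0, 1} \<Longrightarrow> lin l (Fact (bvec (k, js))) = Fact (l (k, js))"
begin

lemma lin_tens_v_comm:
  assumes "in_MV n u" "m \<le> n"
  shows "lin l (tens_v u j) = tens_v (lin l u) j"
proof -
  have "lin l (tens_v u j) = lin (\<lambda>b. tens_v (l b) j) u"
    unfolding lin_tens_v using assms by (intro lin_cong_in_MV) (auto simp: snoc_factor)
  then show ?thesis by (simp add: lin_tens_v_fun)
qed

lemma lin_Fact_bvec_comm:
  "m \<le> length js \<Longrightarrow> set js \<subseteq> {0, 1} \<Longrightarrow> lin l (Fact (bvec (k, js))) = Fact (l (k, js))"
proof (induction js arbitrary: k rule: rev_induct)
  case (snoc j js)
  show ?case
  proof (cases "m \<le> length js")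
    case True
    have js: "set js \<subseteq> {0, 1}" using snoc.prems by auto
    let ?y = "bvec (k, js)"
    have y: "in_MV (length js) ?y" "in_MV (length js) (Fact ?y)"
      using js by (simp_all add: in_MV_bvec in_MV_Fact)
    have "lin l (Fact (bvec (k, js @ [j])))
            = lin l (vadd (vsc (q powi (1 - 2 * int j)) (tens_v (Fact ?y) j))
                          (if j = 0 then tens_v ?y 1 else (\<lambda>_. 0)))"
      by (simp add: Fact_tens_v flip: tens_v_bvec)
    also have "\<dots> = vadd (vsc (q powi (1 - 2 * int j)) (tens_v (lin l (Fact ?y)) j))
                         (if j = 0 then tens_v (l (k, js)) 1 else (\<lambda>_. 0))"
      using True y by (simp add: lin_vadd lin_vsc lin_tens_v_comm lin_bvec)
    also have "\<dots> = Fact (tens_v (l (k, js)) j)"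
      using snoc.IH[OF True js] by (simp add: Fact_tens_v finsupp_image)
    finally show ?thesis
      using True by (simp add: snoc_factor)
  qed (use snoc.prems Fact_on_basis in auto)
qed (simp add: Fact_on_basis)

lemma lin_Fact_comm:
  assumes "finsupp u" "in_MV n u" "m \<le> n"
  shows "lin l (Fact u) = Fact (lin l u)"
proof -
  have "lin l (Fact u) = lin (\<lambda>b. lin l (Fact (bvec b))) u"
    unfolding Fact_def using assms(1) by (subst lin_lin) (auto simp: lin_bvec)
  also have "\<dots> = lin (\<lambda>b. Fact (l b)) u"
    using assms(2,3) by (intro lin_cong_in_MV) (auto simp: lin_Fact_bvec_comm)
  also have "\<dots> = Fact (lin l u)"
    unfolding Fact_def using assms(1) by (subst lin_lin) (simp_all add: finsupp_image)
  finally show ?thesis .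
qed

lemma lin_Fact_pow_comm:
  assumes "finsupp u" "in_MV n u" "m \<le> n"
  shows "lin l ((Fact ^^ p) u) = (Fact ^^ p) (lin l u)"
proof (induction p)
  case (Suc p)
  have "lin l (Fact ((Fact ^^ p) u)) = Fact (lin l ((Fact ^^ p) u))"
    using assms by (intro lin_Fact_comm[of _ n]) (simp_all add: in_MV_Fact_pow)
  with Suc show ?case by simp
qed simp

lemma lin_append_factors_comm:
  assumes "finsupp u" "in_MV n u" "m \<le> n"
  shows "lin l (append_factors zs u) = append_factors zs (lin l u)"
  using assms
proof (induction zs arbitrary: u n)
  case (Cons z zs)
  have "in_MV (Suc n) ((Fact ^^ z) (tens_v u 0))"
    using Cons.prems by (simp add: in_MV_tens_v in_MV_Fact_pow)
  with Cons show ?case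
    by (simp add: lin_Fact_pow_comm[of _ "Suc n"] in_MV_tens_v lin_tens_v_comm)
qed simp

end

section \<open>Cap, cup and \<open>\<xi>\<close> on the vectors \<open>v\<^sub>\<rho>\<close>\<close>

definition cap_basis :: "nat \<Rightarrow> basis \<Rightarrow> vec" where
  "cap_basis i = (\<lambda>(k, js).
     vsc (capV (js ! (i - 1)) (js ! i)) (bvec (k, take (i - 1) js @ drop (i + 1) js)))"

lemma capi_eq_lin: "capi i = lin (cap_basis i)"
  by (simp add: capi_def cap_basis_def)

lemma cap_basis_last_two:
  "1 \<le> i \<Longrightarrow> length pre = i - 1 \<Longrightarrow> cap_basis i (k, pre @ [a, c]) = vsc (capV a c) (bvec (k, pre))"
  by (cases i) (simp_all add: cap_basis_def nth_append)

lemma capi_vadd: "finsupp u \<Longrightarrow> finsupp w \<Longrightarrow> capi i (vadd u w) = vadd (capi i u) (capi i w)"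
  unfolding capi_eq_lin by (rule lin_vadd)

lemma capi_vsc: "capi i (vsc a u) = vsc a (capi i u)"
  unfolding capi_eq_lin by (rule lin_vsc)

lemma capi_tens_v_tens_v:
  assumes "1 \<le> i" "in_MV (i - 1) z" "finsupp z"
  shows "capi i (tens_v (tens_v z a) c) = vsc (capV a c) z"
proof -
  have "capi i (tens_v (tens_v z a) c) = lin (\<lambda>b. vsc (capV a c) (bvec b)) z"
    unfolding capi_eq_lin lin_tens_v case_prod_unfold
    using assms by (intro lin_cong_in_MV) (auto simp: cap_basis_last_two)
  also have "\<dots> = vsc (capV a c) z"
    using assms by (simp add: lin_vsc_fun lin_bvec_id)
  finally show ?thesis .
qed

lemma F_intertwiner_cap:
  assumes i: "1 \<le> i"
  shows "F_intertwiner (cap_basis i) (i + 1)"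
proof
  show "finsupp (cap_basis i b)" for b
    by (simp add: cap_basis_def split: prod.split)
  show "cap_basis i (k, js @ [j]) = tens_v (cap_basis i (k, js)) j" if "i + 1 \<le> length js" for k js j
    using that by (simp add: cap_basis_def nth_append_left tens_v_vsc tens_v_bvec)
  fix k and js :: "nat list"
  assume js: "length js = i + 1" "set js \<subseteq> {0, 1}"
  obtain xs c where "js = xs @ [c]"
    using js(1) by (cases js rule: rev_cases) auto
  moreover obtain pre a where "xs = pre @ [a]"
    using js(1) i calculation by (cases xs rule: rev_cases) auto
  ultimately have pre: "js = pre @ [a, c]" by simp
  have len: "length pre = i - 1" using js(1) pre by simp
  let ?y = "bvec (k, pre)"
  have y: "in_MV (i - 1) ?y" "in_MV (i - 1) (Fact ?y)"
    using js len pre by (simp_all add: in_MV_bvec in_MV_Fact)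
  note cap_y = capi_tens_v_tens_v[OF i y(1)] capi_tens_v_tens_v[OF i y(2)]
  have "a = 0 \<or> a = 1" "c = 0 \<or> c = 1"
    using js pre by auto
  then have "capi i (Fact (tens_v (tens_v ?y a) c)) = Fact (vsc (capV a c) ?y)"
    by (elim disjE) (simp_all add: Fact_tens_v0 Fact_tens_v1 tens_v_vadd tens_v_vsc capi_vadd capi_vsc
        cap_y Fact_vsc capV_def, (rule ext, simp add: vadd_def vsc_def q_nonzero)+)
  then show "lin (cap_basis i) (Fact (bvec (k, js))) = Fact (cap_basis i (k, js))"
    using i len pre by (simp add: capi_eq_lin tens_v_bvec cap_basis_last_two)
qed

lemma capi_vrho:
  assumes i: "1 \<le> i" and len: "length pre = i - 1"
  shows "capi i (vrho (pre @ [a, b, d] @ rest))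
           = vsc (- inverse q * qint (int b)) (vrho (pre @ [a + b + d - 1] @ rest))"
proof -
  interpret F_intertwiner "cap_basis i" "i + 1"
    using i by (rule F_intertwiner_cap)
  define y where "y = vrho (pre @ [a])"
  have y: "in_MV (i - 1) ((Fact ^^ n) y)" "finsupp ((Fact ^^ n) y)" for n
    using in_MV_vrho[of "pre @ [a]"] len by (simp_all add: y_def in_MV_Fact_pow)
  define w where "w = tens_v ((Fact ^^ b) (tens_v y 0)) 0"
  have "in_MV (Suc (Suc (i - 1))) w"
    using y(1)[of 0] unfolding w_def by (intro in_MV_tens_v in_MV_Fact_pow) simp_all
  then have w: "in_MV (i + 1) w" "finsupp w"
    using i y(2)[of 0] by (simp_all add: w_def)
  have "capi i w = vsc (- inverse q * qint (int b)) ((Fact ^^ (b - 1)) y)"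
    using i y y(2)[of 0] unfolding w_def
    by (simp add: Fact_pow_tens_v0 tens_v_vadd tens_v_vsc capi_vadd capi_vsc capi_tens_v_tens_v capV_def)
      (simp add: vadd_def vsc_def mult.commute)
  moreover have "vrho (pre @ [a, b, d] @ rest) = append_factors rest ((Fact ^^ d) w)"
    using vrho_append[of "pre @ [a]" "[b, d] @ rest"] by (simp add: y_def w_def)
  moreover have "capi i (append_factors rest ((Fact ^^ d) w))
                   = append_factors rest ((Fact ^^ d) (capi i w))"
    using w by (simp add: capi_eq_lin lin_append_factors_comm[of _ "i + 1"]
        lin_Fact_pow_comm[of _ "i + 1"] in_MV_Fact_pow)
  ultimately have "capi i (vrho (pre @ [a, b, d] @ rest))
                     = vsc (- inverse q * qint (int b)) (append_factors rest ((Fact ^^ (d + (b - 1))) y))"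
    by (simp add: append_factors_vsc Fact_pow_vsc funpow_add)
  also have "\<dots> = vsc (- inverse q * qint (int b)) (vrho (pre @ [a + b + d - 1] @ rest))"
    using vrho_append[of "pre @ [a + b + d - 1]" rest]
    by (cases b) (simp_all add: y_def Fact_pow_vrho vsc_def add_ac)
  finally show ?thesis .
qed

definition cup_basis :: "nat \<Rightarrow> basis \<Rightarrow> vec" where
  "cup_basis i = (\<lambda>(k, js). vadd (vsc (- q) (bvec (k, take (i - 1) js @ [0, 1] @ drop (i - 1) js)))
                                 (bvec (k, take (i - 1) js @ [1, 0] @ drop (i - 1) js)))"

lemma cupi_eq_lin: "cupi i = lin (cup_basis i)"
  by (simp add: cupi_def cup_basis_def)

lemma cupi_at_end:
  assumes "in_MV (i - 1) z" "finsupp z"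
  shows "cupi i z = vadd (vsc (- q) (tens_v (tens_v z 0) 1)) (tens_v (tens_v z 1) 0)"
proof -
  have "cupi i z
          = lin (\<lambda>b. vadd (vsc (- q) (tens_v (tens_v (bvec b) 0) 1)) (tens_v (tens_v (bvec b) 1) 0)) z"
    unfolding cupi_eq_lin using assms(1)
    by (intro lin_cong_in_MV) (auto simp: cup_basis_def tens_v_bvec)
  then show ?thesis
    using assms(2) by (simp add: lin_vadd_fun lin_vsc_fun lin_tens_v_fun lin_bvec_id)
qed

lemma F_intertwiner_cup: "F_intertwiner (cup_basis i) (i - 1)"
proof
  show "finsupp (cup_basis i b)" for b
    by (simp add: cup_basis_def split: prod.split)
  show "cup_basis i (k, js @ [j]) = tens_v (cup_basis i (k, js)) j" if "i - 1 \<le> length js" for k js j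
    using that by (simp add: cup_basis_def tens_v_vadd tens_v_vsc tens_v_bvec)
  fix k and js :: "nat list"
  assume js: "length js = i - 1" "set js \<subseteq> {0, 1}"
  let ?y = "bvec (k, js)"
  have y: "in_MV (i - 1) ?y" "in_MV (i - 1) (Fact ?y)"
    using js by (simp_all add: in_MV_bvec in_MV_Fact)
  have "cupi i (Fact ?y) = Fact (vadd (vsc (- q) (tens_v (tens_v ?y 0) 1)) (tens_v (tens_v ?y 1) 0))"
    using q_nonzero cupi_at_end[OF y(2)]
    by (simp add: Fact_vadd Fact_vsc Fact_tens_v0 Fact_tens_v1 tens_v_vadd tens_v_vsc)
      (simp add: vadd_def vsc_def algebra_simps)
  then show "lin (cup_basis i) (Fact ?y) = Fact (cup_basis i (k, js))"
    using js by (simp add: cupi_eq_lin cup_basis_def tens_v_bvec)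
qed

lemma cupi_vrho:
  "cupi (Suc (length pre)) (vrho (pre @ [a] @ rest))
     = vadd (vadd (vsc (q * qint 2) (vrho (pre @ [a, 1, 0] @ rest)))
                  (vsc (- q) (vrho (pre @ [a + 1, 0, 0] @ rest))))
            (vsc (- q) (vrho (pre @ [a, 0, 1] @ rest)))"
proof -
  interpret F_intertwiner "cup_basis (Suc (length pre))" "length pre"
    using F_intertwiner_cup[of "Suc (length pre)"] by simp
  define v where "v = vrho (pre @ [a])"
  have v: "in_MV (length pre) v" "finsupp v" "finsupp (Fact v)"
    using in_MV_vrho[of "pre @ [a]"] by (simp_all add: v_def)
  have vrho_10: "vrho (pre @ [a, 1, 0] @ rest) = append_factors rest (tens_v (Fact (tens_v v 0)) 0)"
    using vrho_append[of "pre @ [a]" "[1, 0] @ rest"] by (simp add: v_def)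
  have vrho_01: "vrho (pre @ [a, 0, 1] @ rest) = append_factors rest (Fact (tens_v (tens_v v 0) 0))"
    using vrho_append[of "pre @ [a]" "[0, 1] @ rest"] by (simp add: v_def)
  have vrho_00: "vrho (pre @ [a + 1, 0, 0] @ rest) = append_factors rest (tens_v (tens_v (Fact v) 0) 0)"
    using vrho_append[of "pre @ [a + 1]" "[0, 0] @ rest"] Fact_pow_vrho[of 1 pre a] by (simp add: v_def)
  have "vrho (pre @ [a] @ rest) = append_factors rest v"
    using vrho_append[of "pre @ [a]" rest] by (simp add: v_def)
  then have "cupi (Suc (length pre)) (vrho (pre @ [a] @ rest))
               = append_factors rest (cupi (Suc (length pre)) v)"
    unfolding cupi_eq_lin using v by (simp add: lin_append_factors_comm)
  also have "cupi (Suc (length pre)) v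
      = vadd (vadd (vsc (q * qint 2) (tens_v (Fact (tens_v v 0)) 0))
                   (vsc (- q) (tens_v (tens_v (Fact v) 0) 0)))
             (vsc (- q) (Fact (tens_v (tens_v v 0) 0)))"
    using v q_nonzero
    by (simp add: cupi_at_end Fact_tens_v0 Fact_tens_v1 Fact_vadd Fact_vsc tens_v_vadd tens_v_vsc qint_2)
      (simp add: vadd_def vsc_def algebra_simps)
  finally show ?thesis
    unfolding vrho_10 vrho_01 vrho_00 using v by (simp add: append_factors_vadd append_factors_vsc)
qed

definition xi_diag0 :: "nat \<Rightarrow> K" where
  "xi_diag0 k = inverse lam * q ^ (2 * k)"

definition xi_lower :: "nat \<Rightarrow> K" where
  "xi_lower k = - q * (q - inverse q) * qint (int k) * qbeta (1 - int k)"

definition xi_diag1 :: "nat \<Rightarrow> K" where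
  "xi_diag1 k = inverse lam + lam * q ^ 2 - inverse lam * q ^ (2 * (k + 1))"

definition xi_raise :: "nat \<Rightarrow> K" where
  "xi_raise k = - inverse lam * q ^ (2 * (k + 1)) * (q - inverse q)"

definition xi_basis :: "basis \<Rightarrow> vec" where
  "xi_basis = (\<lambda>(k, js). case js of [] \<Rightarrow> (\<lambda>_. 0)
     | j # rest \<Rightarrow>
       (if j = 0
        then vadd (vsc (xi_diag0 k) (bvec (k, 0 # rest))) (vsc (xi_lower k) (bvec (k - 1, 1 # rest)))
        else vadd (vsc (xi_diag1 k) (bvec (k, 1 # rest))) (vsc (xi_raise k) (bvec (k + 1, 0 # rest)))))"

lemma xiop_eq_lin: "xiop = lin xi_basis"
  unfolding xiop_def xi_basis_def xi_diag0_def xi_lower_def xi_diag1_def xi_raise_def ..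

lemma xi_lower_eq: "xi_lower k = - q * qint (int k) * (lam * q / q ^ k - q ^ k / (lam * q))"
  using qbeta_1_minus[of k] by (simp add: xi_lower_def mult_ac)

lemma xi_lower_0 [simp]: "xi_lower 0 = 0"
  by (simp add: xi_lower_def)

text \<open>The next four identities are the coefficient comparisons in
  \<open>\<xi>(F (v\<^sub>\<lambda>\<^sub>,\<^sub>k \<otimes> v\<^sub>1\<^sub>,\<^sub>j)) = F (\<xi>(v\<^sub>\<lambda>\<^sub>,\<^sub>k \<otimes> v\<^sub>1\<^sub>,\<^sub>j))\<close>, \<open>j = 0, 1\<close>.\<close>

lemma xi_raise_step: "q * xi_diag0 (Suc k) + xi_raise k = xi_diag0 k * q"
  unfolding xi_diag0_def xi_raise_def q_powers using q_nonzero lam_nonzero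
  by (simp add: field_simps power2_eq_square)

lemma xi_diag1_step: "inverse q * xi_diag1 (Suc k) = xi_diag1 k * inverse q + xi_raise k"
  unfolding xi_diag1_def xi_raise_def q_powers using q_nonzero lam_nonzero
  by (simp add: field_simps power2_eq_square)

lemma xi_raise_Suc: "inverse q * xi_raise (Suc k) = xi_raise k * q"
  unfolding xi_raise_def q_powers using q_nonzero lam_nonzero
  by (simp add: field_simps power2_eq_square)

lemma xi_lower_step: "q * xi_lower (Suc k) + xi_diag1 k = xi_diag0 k + xi_lower k * inverse q"
proof -
  have "q ^ k \<noteq> 0" using q_nonzero by simp
  then show ?thesis
    unfolding xi_lower_eq xi_diag1_def xi_diag0_def qint_of_nat q_powers
    using q_nonzero lam_nonzero q_minus_inverse_nonzero
    by (simp add: field_simps power2_eq_square)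
qed

lemma xi_lower_split:
  "xi_lower (Suc n) = (inverse lam * q ^ Suc n - lam * q * qint (int (Suc n))) * qint (int (Suc n))
                        + lam * q ^ 2 * qint (int (Suc n)) * qint (int n)"
  unfolding xi_lower_eq using qint_Suc'[of n] q_nonzero lam_nonzero
  by (simp add: field_simps power2_eq_square)

lemma F_intertwiner_xi: "F_intertwiner xi_basis 1"
proof
  show "finsupp (xi_basis b)" for b
    by (simp add: xi_basis_def split: prod.split list.split)
  show "xi_basis (k, js @ [j]) = tens_v (xi_basis (k, js)) j" if "1 \<le> length js" for k js j
    using that by (cases js) (simp_all add: xi_basis_def tens_v_vadd tens_v_vsc tens_v_bvec)
  fix k and js :: "nat list"
  assume "length js = 1" "set js \<subseteq> {0, 1}"
  then consider "js = [0]" | "js = [1]"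
    by (cases js) auto
  then show "lin xi_basis (Fact (bvec (k, js))) = Fact (xi_basis (k, js))"
  proof cases
    case 1
    have "lin xi_basis (Fact (bvec (k, [0])))
            = vadd (vsc (q * xi_diag0 (Suc k) + xi_raise k) (bvec (Suc k, [0])))
                   (vsc (q * xi_lower (Suc k) + xi_diag1 k) (bvec (k, [1])))"
      by (simp add: Fact_bvec_0 lin_vadd lin_vsc lin_bvec xi_basis_def)
        (simp add: vadd_def vsc_def algebra_simps)
    also have "\<dots> = vadd (vsc (xi_diag0 k * q) (bvec (Suc k, [0])))
                         (vsc (xi_diag0 k + xi_lower k * inverse q) (bvec (k, [1])))"
      by (simp only: xi_raise_step xi_lower_step)
    also have "\<dots> = Fact (xi_basis (k, [0]))"
      by (cases k) (simp_all add: xi_basis_def Fact_vadd Fact_vsc Fact_bvec_0 Fact_bvec_1,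
          (simp add: vadd_def vsc_def algebra_simps)+)
    finally show ?thesis using 1 by simp
  next
    case 2
    have "lin xi_basis (Fact (bvec (k, [1])))
            = vadd (vsc (inverse q * xi_diag1 (Suc k)) (bvec (Suc k, [1])))
                   (vsc (inverse q * xi_raise (Suc k)) (bvec (Suc (Suc k), [0])))"
      by (simp add: Fact_bvec_1 lin_vsc lin_bvec xi_basis_def)
        (simp add: vadd_def vsc_def algebra_simps)
    also have "\<dots> = vadd (vsc (xi_diag1 k * inverse q + xi_raise k) (bvec (Suc k, [1])))
                         (vsc (xi_raise k * q) (bvec (Suc (Suc k), [0])))"
      by (simp only: xi_diag1_step xi_raise_Suc)
    also have "\<dots> = Fact (xi_basis (k, [1]))"
      by (simp add: xi_basis_def Fact_vadd Fact_vsc Fact_bvec_0 Fact_bvec_1)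
        (simp add: vadd_def vsc_def algebra_simps)
    finally show ?thesis using 2 by simp
  qed
qed

lemma xi_basis_initial:
  "xi_basis (n, [0])
     = vadd (vsc (inverse lam * q ^ n - lam * q * qint (int n)) ((Fact ^^ n) (bvec (0, [0]))))
            (vsc (lam * q ^ 2 * qint (int n)) ((Fact ^^ (n - 1)) (bvec (1, [0]))))"
    (is "_ = vadd (vsc ?A _) (vsc ?B _)")
proof (cases n)
  case 0
  then show ?thesis by (simp add: xi_basis_def xi_diag0_def) (simp add: vadd_def vsc_def)
next
  case (Suc m)
  have "xi_basis (n, [0])
          = vadd (vsc (xi_diag0 n) (bvec (n, [0]))) (vsc (xi_lower n) (bvec (n - 1, [1])))"
    by (simp add: xi_basis_def)
  also have "\<dots> = vadd (vsc (?A * q ^ n + ?B * q ^ (n - 1)) (bvec (n, [0])))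
                       (vsc (?A * qint (int n) + ?B * qint (int (n - 1))) (bvec (n - 1, [1])))"
  proof -
    have "xi_diag0 n = ?A * q ^ n + ?B * q ^ (n - 1)"
      unfolding xi_diag0_def Suc q_powers by (simp add: algebra_simps power2_eq_square)
    moreover have "xi_lower n = ?A * qint (int n) + ?B * qint (int (n - 1))"
      unfolding Suc by (simp add: xi_lower_split algebra_simps)
    ultimately show ?thesis by simp
  qed
  also have "\<dots> = vadd (vsc ?A ((Fact ^^ n) (bvec (0, [0]))))
                       (vsc ?B ((Fact ^^ (n - 1)) (bvec (1, [0]))))"
    unfolding Fact_pow_bvec_0 using Suc by (simp add: vadd_def vsc_def algebra_simps)
  finally show ?thesis .
qed

lemma xiop_vrho:
  "xiop (vrho (b0 # b1 # rest))
     = vadd (vsc (inverse lam * q ^ b0 - lam * q * qint (int b0)) (vrho (0 # (b0 + b1) # rest)))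
            (vsc (lam * q ^ 2 * qint (int b0)) (vrho (1 # (b0 + b1 - 1) # rest)))"
proof -
  interpret F_intertwiner xi_basis 1
    by (rule F_intertwiner_xi)
  have vrho_eq: "vrho (b # b' # rest) = append_factors rest ((Fact ^^ b') (bvec (b, [0])))" for b b'
    using vrho_append[of "[b]" "b' # rest"] by (simp add: vrho_singleton tens_v_bvec)
  have "xiop (vrho (b0 # b1 # rest)) = append_factors rest ((Fact ^^ b1) (xi_basis (b0, [0])))"
    unfolding vrho_eq xiop_eq_lin
    by (simp add: lin_append_factors_comm[of _ 1] lin_Fact_pow_comm[of _ 1] in_MV_bvec in_MV_Fact_pow
        lin_bvec)
  also have "\<dots> = vadd (vsc (inverse lam * q ^ b0 - lam * q * qint (int b0))
                              (append_factors rest ((Fact ^^ (b1 + b0)) (bvec (0, [0])))))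
                       (vsc (lam * q ^ 2 * qint (int b0))
                              (append_factors rest ((Fact ^^ (b1 + (b0 - 1))) (bvec (1, [0])))))"
    by (simp add: xi_basis_initial Fact_pow_vadd Fact_pow_vsc append_factors_vadd append_factors_vsc
        funpow_add)
  also have "\<dots> = vadd (vsc (inverse lam * q ^ b0 - lam * q * qint (int b0)) (vrho (0 # (b0 + b1) # rest)))
                       (vsc (lam * q ^ 2 * qint (int b0)) (vrho (1 # (b0 + b1 - 1) # rest)))"
    by (cases b0) (simp_all add: vrho_eq vsc_def add.commute)
  finally show ?thesis .
qed

theorem lemma2p4:
  shows "(\<forall>r i bs. 2 \<le> r \<and> 1 \<le> i \<and> i \<le> r - 1 \<and> length bs = r + 1 \<longrightarrow>
            capi i (vrho bs) =
              vsc (- inverse q * qint (int (bs ! i)))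
                  (vrho (take (i - 1) bs @ [bs ! (i - 1) + bs ! i + bs ! (i + 1) - 1] @ drop (i + 2) bs)))
       \<and> (\<forall>r i bs. 1 \<le> i \<and> i \<le> r + 1 \<and> length bs = r + 1 \<longrightarrow>
            cupi i (vrho bs) =
              vadd (vadd (vsc (q * qint 2) (vrho (take i bs @ [1, 0] @ drop i bs)))
                         (vsc (- q) (vrho (take (i - 1) bs @ [bs ! (i - 1) + 1, 0, 0] @ drop i bs))))
                   (vsc (- q) (vrho (take i bs @ [0, 1] @ drop i bs))))
       \<and> (\<forall>r b0 b1 rest. 1 \<le> r \<and> length (b0 # b1 # rest) = r + 1 \<longrightarrow>
            xiop (vrho (b0 # b1 # rest)) =
              vadd (vsc (inverse lam * q ^ b0 - lam * q * qint (int b0)) (vrho (0 # (b0 + b1) # rest)))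
                   (vsc (lam * q ^ 2 * qint (int b0)) (vrho (1 # (b0 + b1 - 1) # rest))))"
proof (intro conjI allI impI)
  fix r i and bs :: "nat list"
  assume "2 \<le> r \<and> 1 \<le> i \<and> i \<le> r - 1 \<and> length bs = r + 1"
  then have i: "1 \<le> i" "i + 1 < length bs" by auto
  then have "bs = take (i - 1) bs @ [bs ! (i - 1), bs ! i, bs ! (i + 1)] @ drop (i + 2) bs"
    using id_take_nth_drop[of "i - 1" bs] by (simp add: Cons_nth_drop_Suc)
  then have "capi i (vrho bs)
               = capi i (vrho (take (i - 1) bs @ [bs ! (i - 1), bs ! i, bs ! (i + 1)] @ drop (i + 2) bs))"
    by (rule arg_cong)
  also have "\<dots> = vsc (- inverse q * qint (int (bs ! i)))
                    (vrho (take (i - 1) bs @ [bs ! (i - 1) + bs ! i + bs ! (i + 1) - 1] @ drop (i + 2) bs))"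
    using i by (intro capi_vrho) simp_all
  finally show "capi i (vrho bs) = \<dots>" .
next
  fix r i and bs :: "nat list"
  assume "1 \<le> i \<and> i \<le> r + 1 \<and> length bs = r + 1"
  then have i: "Suc (length (take (i - 1) bs)) = i" "i - 1 < length bs" by auto
  then have "bs = take (i - 1) bs @ [bs ! (i - 1)] @ drop i bs"
    using id_take_nth_drop[of "i - 1" bs] by simp
  then have "cupi i (vrho bs) = cupi i (vrho (take (i - 1) bs @ [bs ! (i - 1)] @ drop i bs))"
    by (rule arg_cong)
  also have "\<dots> = vadd (vadd (vsc (q * qint 2) (vrho (take i bs @ [1, 0] @ drop i bs)))
                             (vsc (- q) (vrho (take (i - 1) bs @ [bs ! (i - 1) + 1, 0, 0] @ drop i bs))))
                       (vsc (- q) (vrho (take i bs @ [0, 1] @ drop i bs)))"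
    using cupi_vrho[of "take (i - 1) bs" "bs ! (i - 1)" "drop i bs"] take_Suc_conv_app_nth[OF i(2)] i(1)
    by simp
  finally show "cupi i (vrho bs) = \<dots>" .
qed (rule xiop_vrho)

end
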